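(* Let $X$ be a Polish space, $(Y,d)$ a Polish metric space, $Z$ a topological space, and $P: X \rightsquigarrow Y$ a tight Feller kernel. Let $R \subseteq X \times Z$ and $S \subseteq Y \times Z$ be closed and $\epsilon \ge 0$. Then $$P_{!W}^\epsilon(R \cap P^{*,0}_W S) \subseteq P_{!W}^\epsilon R \cap \{(\nu,z) \in \mathcal{P}(Y) \times Z : \nu \in \mathrm{Cure}_\epsilon(S_z)\}.$$
   Context: $W_1(\mu,\nu) = \inf_{\pi \in \Pi(\mu,\nu)} \int d(y,y')\,d\pi$. For closed $A \subseteq Y$, $\mathcal{P}_A = \{\nu \in \mathcal{P}_1(Y) : \mathrm{supp}(\nu) \subseteq A\}$ ($\mathcal{P}_1$ = probability measures with finite first moment) and $W_1(\mu,\mathcal{P}_A) = \inf_{\nu \in \mathcal{P}_A} W_1(\mu,\nu)$; $\mathrm{Cure}_\epsilon(A) = \{\nu \in \mathcal{P}(Y) : W_1(\nu, \mathcal{P}_A) \le \epsilon\}$. $S_z = \{y : (y,z) \in S\}$. Wasserstein pullback: $P^{*,\eta}_W S = \{(x,z) : W_1(P(x), \mathcal{P}_{S_z}) \le \eta\}$. Wasserstein pushforward: $P_{!W}^\epsilon T = \{(\nu,z) \in \mathcal{P}(Y) \times Z : \exists x,\ (x,z) \in T,\ W_1(P(x),\nu) \le \epsilon\}$. Feller/tight as usual for Markov kernels. *)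

theory Defs
  imports "HOL-Analysis.Analysis" "HOL-Probability.Probability"
begin

definition prob_measures :: "'a::topological_space measure set" where
  "prob_measures = {\<nu>. sets \<nu> = sets borel \<and> prob_space \<nu>}"

definition prob_measures_1 :: "'a::metric_space measure set" where
  "prob_measures_1 = {\<nu> \<in> prob_measures. \<exists>y0. (\<integral>\<^sup>+ y. ennreal (dist y0 y) \<partial>\<nu>) < \<infinity>}"

definition supp :: "'a::topological_space measure \<Rightarrow> 'a set" where
  "supp \<nu> = {y. \<forall>U. open U \<longrightarrow> y \<in> U \<longrightarrow> 0 < emeasure \<nu> U}"

definition couplings :: "'a::topological_space measure \<Rightarrow> 'a measure \<Rightarrow> ('a \<times> 'a) measure set" where
  "couplings \<mu> \<nu> = {\<pi>. sets \<pi> = sets borel \<and> prob_space \<pi> \<and>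
                         distr \<pi> borel fst = \<mu> \<and> distr \<pi> borel snd = \<nu>}"

definition W1 :: "'a::metric_space measure \<Rightarrow> 'a measure \<Rightarrow> ennreal" where
  "W1 \<mu> \<nu> = (INF \<pi> \<in> couplings \<mu> \<nu>. \<integral>\<^sup>+ p. ennreal (dist (fst p) (snd p)) \<partial>\<pi>)"

definition PA :: "'a::metric_space set \<Rightarrow> 'a measure set" where
  "PA A = {\<nu> \<in> prob_measures_1. supp \<nu> \<subseteq> A}"

definition W1_set :: "'a::metric_space measure \<Rightarrow> 'a set \<Rightarrow> ennreal" where
  "W1_set \<mu> A = (INF \<nu> \<in> PA A. W1 \<mu> \<nu>)"

definition Cure :: "real \<Rightarrow> 'a::metric_space set \<Rightarrow> 'a measure set" where
  "Cure \<epsilon> A = {\<nu> \<in> prob_measures. W1_set \<nu> A \<le> ennreal \<epsilon>}"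

definition section_at :: "('y \<times> 'z) set \<Rightarrow> 'z \<Rightarrow> 'y set" where
  "section_at S z = {y. (y, z) \<in> S}"

definition W_pullback :: "('x \<Rightarrow> 'y::metric_space measure) \<Rightarrow> real \<Rightarrow> ('y \<times> 'z) set \<Rightarrow> ('x \<times> 'z) set" where
  "W_pullback P \<eta> S = {(x, z). W1_set (P x) (section_at S z) \<le> ennreal \<eta>}"

definition W_pushforward :: "('x \<Rightarrow> 'y::metric_space measure) \<Rightarrow> real \<Rightarrow> ('x \<times> 'z) set \<Rightarrow> ('y measure \<times> 'z) set" where
  "W_pushforward P \<epsilon> T = {(\<nu>, z). \<nu> \<in> prob_measures \<and> (\<exists>x. (x, z) \<in> T \<and> W1 (P x) \<nu> \<le> ennreal \<epsilon>)}"

definition markov_kernel :: "('x::topological_space \<Rightarrow> 'y::topological_space measure) \<Rightarrow> bool" where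
  "markov_kernel P \<longleftrightarrow> P \<in> borel \<rightarrow>\<^sub>M prob_algebra borel"

definition feller :: "('x::topological_space \<Rightarrow> 'y::topological_space measure) \<Rightarrow> bool" where
  "feller P \<longleftrightarrow> (\<forall>f :: 'y \<Rightarrow> real. continuous_on UNIV f \<and> bounded (range f) \<longrightarrow>
                    continuous_on UNIV (\<lambda>x. \<integral> y. f y \<partial>(P x)))"

definition tight_kernel :: "('x \<Rightarrow> 'y::topological_space measure) \<Rightarrow> bool" where
  "tight_kernel P \<longleftrightarrow> (\<forall>e>0. \<exists>K. compact K \<and> (\<forall>x. measure (P x) (UNIV - K) \<le> e))"

end

theory Submission
  imports Defs
begin

text \<open>
If \<open>W\<^sub>1(P x, \<P>\<^sub>A) = 0\<close> for a closed set \<open>A\<close>, then \<open>P x\<close> itself lies in \<open>\<P>\<^sub>A\<close>: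
a point outside \<open>A\<close> at distance \<open>r\<close> from \<open>A\<close> whose \<open>r/2\<close>-ball had positive mass would
force every coupling with a measure living on \<open>A\<close> to cost at least \<open>r/2\<close> times that mass,
and a finite first moment is inherited through any coupling of finite cost.
Hence \<open>W\<^sub>1(\<nu>, \<P>\<^sub>A) \<le> W\<^sub>1(\<nu>, P x) = W\<^sub>1(P x, \<nu>) \<le> \<epsilon>\<close>.
\<close>

abbreviation transport_cost :: "('a::metric_space \<times> 'a) measure \<Rightarrow> ennreal" where
  "transport_cost \<pi> \<equiv> \<integral>\<^sup>+ p. ennreal (dist (fst p) (snd p)) \<partial>\<pi>"

lemma borel_measurable_continuous_on_sets_borel:
  assumes "sets M = sets borel" "continuous_on UNIV f"
  shows "f \<in> borel_measurable M"
  by (subst measurable_cong_sets[OF assms(1) refl]) (rule borel_measurable_continuous_onI[OF assms(2)])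

lemma borel_measurable_dist_ennreal_sets_borel:
  fixes f g :: "'a::topological_space \<Rightarrow> 'b::metric_space"
  assumes "sets M = sets borel" "continuous_on UNIV f" "continuous_on UNIV g"
  shows "(\<lambda>p. ennreal (dist (f p) (g p))) \<in> borel_measurable M"
  by (rule measurable_compose[OF _ measurable_ennreal],
      rule borel_measurable_continuous_on_sets_borel[OF assms(1)])
     (intro continuous_intros assms(2,3))

lemma space_eq_UNIV_of_sets_borel: "sets M = sets (borel::'a::topological_space measure) \<Longrightarrow> space M = UNIV"
  using sets_eq_imp_space_eq by fastforce

lemma couplingsD:
  assumes "\<pi> \<in> couplings \<mu> \<nu>"
  shows "sets \<pi> = sets borel" "prob_space \<pi>" "distr \<pi> borel fst = \<mu>" "distr \<pi> borel snd = \<nu>"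
  using assms by (auto simp: couplings_def)

lemma
  assumes "\<pi> \<in> couplings \<mu> \<nu>"
  shows measurable_fst_coupling: "fst \<in> \<pi> \<rightarrow>\<^sub>M borel"
    and measurable_snd_coupling: "snd \<in> \<pi> \<rightarrow>\<^sub>M borel"
  by (rule borel_measurable_continuous_on_sets_borel[OF couplingsD(1)[OF assms]],
      intro continuous_intros)+

lemma
  assumes "\<pi> \<in> couplings \<mu> \<nu>" "B \<in> sets borel"
  shows emeasure_coupling_fst: "emeasure \<mu> B = emeasure \<pi> (fst -` B)"
    and emeasure_coupling_snd: "emeasure \<nu> B = emeasure \<pi> (snd -` B)"
  using emeasure_distr[OF measurable_fst_coupling[OF assms(1)] assms(2)]
    emeasure_distr[OF measurable_snd_coupling[OF assms(1)] assms(2)]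
    couplingsD(3,4)[OF assms(1)] space_eq_UNIV_of_sets_borel[OF couplingsD(1)[OF assms(1)]]
  by auto

lemma
  assumes "\<pi> \<in> couplings \<mu> \<nu>" "f \<in> borel_measurable borel"
  shows nn_integral_coupling_fst: "(\<integral>\<^sup>+ y. f y \<partial>\<mu>) = (\<integral>\<^sup>+ p. f (fst p) \<partial>\<pi>)"
    and nn_integral_coupling_snd: "(\<integral>\<^sup>+ y. f y \<partial>\<nu>) = (\<integral>\<^sup>+ p. f (snd p) \<partial>\<pi>)"
  using nn_integral_distr[OF measurable_fst_coupling[OF assms(1)], of f]
    nn_integral_distr[OF measurable_snd_coupling[OF assms(1)], of f]
    couplingsD(3,4)[OF assms(1)] assms(2)
  by auto

lemma W1_le_commute:
  fixes \<mu> \<nu> :: "'a::metric_space measure"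
  shows "W1 \<nu> \<mu> \<le> W1 \<mu> \<nu>"
  unfolding W1_def
proof (rule INF_greatest)
  fix \<pi> assume \<pi>: "\<pi> \<in> couplings \<mu> \<nu>"
  define swap :: "'a \<times> 'a \<Rightarrow> 'a \<times> 'a" where "swap = (\<lambda>(a, b). (b, a))"
  have swap_measurable: "swap \<in> \<pi> \<rightarrow>\<^sub>M borel"
    unfolding swap_def case_prod_beta
    by (rule borel_measurable_continuous_on_sets_borel[OF couplingsD(1)[OF \<pi>]], intro continuous_intros)
  have proj_measurable: "fst \<in> borel \<rightarrow>\<^sub>M (borel::'a measure)" "snd \<in> borel \<rightarrow>\<^sub>M (borel::'a measure)"
    by (rule borel_measurable_continuous_on_sets_borel[OF refl], intro continuous_intros)+
  define \<pi>' where "\<pi>' = distr \<pi> borel swap"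
  have "\<pi>' \<in> couplings \<nu> \<mu>"
    unfolding couplings_def
  proof (intro CollectI conjI)
    show "sets \<pi>' = sets borel" by (simp add: \<pi>'_def)
    show "prob_space \<pi>'"
      unfolding \<pi>'_def by (rule prob_space.prob_space_distr[OF couplingsD(2)[OF \<pi>] swap_measurable])
    have "fst \<circ> swap = snd" "snd \<circ> swap = fst"
      by (auto simp: swap_def)
    then show "distr \<pi>' borel fst = \<nu>" "distr \<pi>' borel snd = \<mu>"
      unfolding \<pi>'_def distr_distr[OF proj_measurable(1) swap_measurable]
        distr_distr[OF proj_measurable(2) swap_measurable]
      by (simp_all only: couplingsD(3,4)[OF \<pi>])
  qed
  moreover have "transport_cost \<pi>' = transport_cost \<pi>"
  proof -
    have "(\<lambda>p. ennreal (dist (fst p) (snd p))) \<in> borel_measurable (borel::('a \<times> 'a) measure)"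
      by (rule borel_measurable_dist_ennreal_sets_borel[OF refl]) (intro continuous_intros)+
    then have "transport_cost \<pi>' = (\<integral>\<^sup>+ p. ennreal (dist (fst (swap p)) (snd (swap p))) \<partial>\<pi>)"
      unfolding \<pi>'_def by (intro nn_integral_distr[OF swap_measurable]) simp
    also have "\<dots> = transport_cost \<pi>"
      by (intro nn_integral_cong) (simp add: swap_def case_prod_beta dist_commute)
    finally show ?thesis .
  qed
  ultimately show "(INF \<pi>\<in>couplings \<nu> \<mu>. transport_cost \<pi>) \<le> transport_cost \<pi>"
    by (intro INF_lower2[of \<pi>']) simp_all
qed

lemma W1_commute: "W1 \<mu> \<nu> = W1 \<nu> (\<mu>::'a::metric_space measure)"
  by (intro antisym W1_le_commute)

lemma null_sets_compl_supp:
  fixes \<nu> :: "'a::{metric_space,second_countable_topology} measure"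
  assumes "sets \<nu> = sets borel"
  shows "- supp \<nu> \<in> null_sets \<nu>"
proof -
  define F where "F = {U. open U \<and> emeasure \<nu> U = 0}"
  have "\<Union>F = - supp \<nu>"
    by (auto simp: F_def supp_def)
  moreover obtain F' where "F' \<subseteq> F" "countable F'" "\<Union>F' = \<Union>F"
    using Lindelof[of F] by (auto simp: F_def)
  moreover have "(\<Union>U\<in>F'. U) \<in> null_sets \<nu>"
    using \<open>F' \<subseteq> F\<close> assms by (intro null_sets_UN'[OF \<open>countable F'\<close>]) (auto simp: F_def null_sets_def)
  ultimately show ?thesis by simp
qed

lemma emeasure_compl_eq_0_if_PA:
  fixes \<rho> :: "'a::{metric_space,second_countable_topology} measure"
  assumes "closed A" "\<rho> \<in> PA A"
  shows "emeasure \<rho> (- A) = 0"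
proof -
  have "sets \<rho> = sets borel" "supp \<rho> \<subseteq> A"
    using assms(2) by (auto simp: PA_def prob_measures_1_def prob_measures_def)
  then have "- A \<in> null_sets \<rho>"
    using assms(1) by (intro null_sets_subset[OF null_sets_compl_supp]) auto
  then show ?thesis by auto
qed

lemma emeasure_ball_le_transport_cost:
  fixes \<mu> \<rho> :: "'a::metric_space measure"
  assumes \<pi>: "\<pi> \<in> couplings \<mu> \<rho>" and A: "closed A" "emeasure \<rho> (- A) = 0"
    and r: "r > 0" "ball y r \<inter> A = {}"
  shows "ennreal (r/2) * emeasure \<mu> (ball y (r/2)) \<le> transport_cost \<pi>"
proof -
  define C where "C = ball y (r/2) \<times> A"
  have "open (ball y (r/2) \<times> (UNIV::'a set))" "closed ((UNIV::'a set) \<times> A)"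
    using A(1) by (auto intro: open_Times closed_Times)
  moreover have "C = (ball y (r/2) \<times> UNIV) \<inter> (UNIV \<times> A)"
    by (auto simp: C_def)
  ultimately have C_sets: "C \<in> sets \<pi>"
    unfolding couplingsD(1)[OF \<pi>] by (metis borel_closed borel_open sets.Int)
  have snd_A_sets: "snd -` (- A) \<in> sets \<pi>"
    using measurable_sets[OF measurable_snd_coupling[OF \<pi>], of "- A"] A(1)
      space_eq_UNIV_of_sets_borel[OF couplingsD(1)[OF \<pi>]] by auto
  have "emeasure \<mu> (ball y (r/2)) = emeasure \<pi> (fst -` ball y (r/2))"
    by (rule emeasure_coupling_fst[OF \<pi>]) simp
  also have "\<dots> \<le> emeasure \<pi> (C \<union> snd -` (- A))"
    using C_sets snd_A_sets by (intro emeasure_mono) (auto simp: C_def)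
  also have "\<dots> \<le> emeasure \<pi> C + emeasure \<pi> (snd -` (- A))"
    using C_sets snd_A_sets by (rule emeasure_subadditive)
  also have "emeasure \<pi> (snd -` (- A)) = 0"
    using emeasure_coupling_snd[OF \<pi>, of "- A"] A by simp
  finally have "ennreal (r/2) * emeasure \<mu> (ball y (r/2)) \<le> ennreal (r/2) * emeasure \<pi> C"
    by (simp add: mult_left_mono)
  also have "\<dots> = (\<integral>\<^sup>+ p. ennreal (r/2) * indicator C p \<partial>\<pi>)"
    by (rule nn_integral_cmult_indicator[OF C_sets, symmetric])
  also have "\<dots> \<le> transport_cost \<pi>"
  proof (rule nn_integral_mono)
    fix p :: "'a \<times> 'a"
    have "r/2 \<le> dist (fst p) (snd p)" if "p \<in> C"
    proof -
      have "dist y (fst p) < r/2" "snd p \<in> A"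
        using that by (auto simp: C_def)
      moreover from \<open>snd p \<in> A\<close> have "r \<le> dist y (snd p)"
        using r(2) by (metis IntI empty_iff mem_ball not_less)
      ultimately show ?thesis
        using dist_triangle[of y "snd p" "fst p"] by (simp add: dist_commute)
    qed
    then show "ennreal (r/2) * indicator C p \<le> ennreal (dist (fst p) (snd p))"
      by (cases "p \<in> C") (simp_all add: ennreal_leI)
  qed
  finally show ?thesis .
qed

lemma supp_subset_if_W1_set_eq_0:
  fixes \<mu> :: "'a::{metric_space,second_countable_topology} measure"
  assumes A: "closed A" and "W1_set \<mu> A = 0"
  shows "supp \<mu> \<subseteq> A"
proof
  fix y assume y: "y \<in> supp \<mu>"
  show "y \<in> A"
  proof (rule ccontr)
    assume "y \<notin> A"
    then obtain r where r: "r > 0" "ball y r \<inter> A = {}"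
      using A open_contains_ball[of "- A"] by (force simp: open_Compl)
    have "ennreal (r/2) * emeasure \<mu> (ball y (r/2)) \<le> W1_set \<mu> A"
      unfolding W1_set_def W1_def
      by (intro INF_greatest emeasure_ball_le_transport_cost[OF _ A _ r]
                emeasure_compl_eq_0_if_PA[OF A])
    moreover have "0 < emeasure \<mu> (ball y (r/2))"
      using y r(1) by (auto simp: supp_def)
    ultimately show False
      using \<open>W1_set \<mu> A = 0\<close> r(1) by (simp add: ennreal_zero_less_mult_iff)
  qed
qed

lemma nn_integral_dist_le_coupling:
  fixes \<mu> \<rho> :: "'a::metric_space measure"
  assumes \<pi>: "\<pi> \<in> couplings \<mu> \<rho>"
  shows "(\<integral>\<^sup>+ y. ennreal (dist y0 y) \<partial>\<mu>) \<le> (\<integral>\<^sup>+ y. ennreal (dist y0 y) \<partial>\<rho>) + transport_cost \<pi>"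
proof -
  have dist_y0_measurable: "(\<lambda>y. ennreal (dist y0 y)) \<in> borel_measurable borel"
    by (rule borel_measurable_dist_ennreal_sets_borel[OF refl]) (intro continuous_intros)+
  have "(\<integral>\<^sup>+ y. ennreal (dist y0 y) \<partial>\<mu>) = (\<integral>\<^sup>+ p. ennreal (dist y0 (fst p)) \<partial>\<pi>)"
    by (rule nn_integral_coupling_fst[OF \<pi> dist_y0_measurable])
  also have "\<dots> \<le> (\<integral>\<^sup>+ p. ennreal (dist y0 (snd p)) + ennreal (dist (fst p) (snd p)) \<partial>\<pi>)"
    by (intro nn_integral_mono)
       (metis dist_commute dist_triangle ennreal_leI ennreal_plus zero_le_dist)
  also have "\<dots> = (\<integral>\<^sup>+ p. ennreal (dist y0 (snd p)) \<partial>\<pi>) + transport_cost \<pi>"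
    using couplingsD(1)[OF \<pi>]
    by (intro nn_integral_add borel_measurable_dist_ennreal_sets_borel) (auto intro: continuous_intros)
  also have "(\<integral>\<^sup>+ p. ennreal (dist y0 (snd p)) \<partial>\<pi>) = (\<integral>\<^sup>+ y. ennreal (dist y0 y) \<partial>\<rho>)"
    by (rule nn_integral_coupling_snd[OF \<pi> dist_y0_measurable, symmetric])
  finally show ?thesis .
qed

lemma finite_first_moment_if_W1_finite:
  fixes \<mu> \<rho> :: "'a::metric_space measure"
  assumes "\<rho> \<in> prob_measures_1" "W1 \<mu> \<rho> < \<infinity>"
  shows "\<exists>y0. (\<integral>\<^sup>+ y. ennreal (dist y0 y) \<partial>\<mu>) < \<infinity>"
proof -
  obtain \<pi> where \<pi>: "\<pi> \<in> couplings \<mu> \<rho>" "transport_cost \<pi> < \<infinity>"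
    using assms(2) unfolding W1_def by (auto simp: INF_less_iff)
  obtain y0 where "(\<integral>\<^sup>+ y. ennreal (dist y0 y) \<partial>\<rho>) < \<infinity>"
    using assms(1) unfolding prob_measures_1_def by auto
  then have "(\<integral>\<^sup>+ y. ennreal (dist y0 y) \<partial>\<mu>) < \<infinity>"
    using nn_integral_dist_le_coupling[OF \<pi>(1), of y0] \<pi>(2)
    by (auto simp: ennreal_add_less_top intro: le_less_trans)
  then show ?thesis ..
qed

lemma PA_if_W1_set_eq_0:
  fixes \<mu> :: "'a::{metric_space,second_countable_topology} measure"
  assumes "closed A" "\<mu> \<in> prob_measures" "W1_set \<mu> A = 0"
  shows "\<mu> \<in> PA A"
proof -
  have "W1_set \<mu> A < \<infinity>"
    using assms(3) by simp
  then obtain \<rho> where "\<rho> \<in> PA A" "W1 \<mu> \<rho> < \<infinity>"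
    unfolding W1_set_def by (auto simp: INF_less_iff)
  then have "\<exists>y0. (\<integral>\<^sup>+ y. ennreal (dist y0 y) \<partial>\<mu>) < \<infinity>"
    by (intro finite_first_moment_if_W1_finite) (auto simp: PA_def)
  then show ?thesis
    using assms supp_subset_if_W1_set_eq_0 by (auto simp: PA_def prob_measures_1_def)
qed

lemma prob_measures_if_markov_kernel: "markov_kernel P \<Longrightarrow> P x \<in> prob_measures"
  unfolding markov_kernel_def prob_measures_def
  by (drule measurable_space[where x = x]) (auto simp: space_prob_algebra)

lemma closed_section_at:
  fixes S :: "('a::topological_space \<times> 'b::topological_space) set"
  assumes "closed S"
  shows "closed (section_at S z)"
proof -
  have "closed ((\<lambda>y. (y, z)) -` S)"
    using assms by (rule closed_vimage) (intro continuous_intros)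
  then show ?thesis
    by (simp add: section_at_def vimage_def)
qed

theorem mainTheorem20:
  fixes P :: "'x::polish_space \<Rightarrow> 'y::polish_space measure"
    and R :: "('x \<times> 'z::topological_space) set"
    and S :: "('y \<times> 'z) set"
    and \<epsilon> :: real
  assumes "markov_kernel P" and "feller P" and "tight_kernel P"
    and "closed R" and "closed S" and "\<epsilon> \<ge> 0"
  shows "W_pushforward P \<epsilon> (R \<inter> W_pullback P 0 S)
           \<subseteq> W_pushforward P \<epsilon> R \<inter> {(\<nu>, z). \<nu> \<in> prob_measures \<and> \<nu> \<in> Cure \<epsilon> (section_at S z)}"
proof
  fix q assume "q \<in> W_pushforward P \<epsilon> (R \<inter> W_pullback P 0 S)"
  then obtain \<nu> z x where q: "q = (\<nu>, z)" and \<nu>: "\<nu> \<in> prob_measures" and "(x, z) \<in> R"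
    and "W1_set (P x) (section_at S z) = 0" and W1_le: "W1 (P x) \<nu> \<le> ennreal \<epsilon>"
    unfolding W_pushforward_def W_pullback_def by auto
  then have "P x \<in> PA (section_at S z)"
    by (intro PA_if_W1_set_eq_0 closed_section_at assms(5) prob_measures_if_markov_kernel[OF assms(1)])
  then have "W1_set \<nu> (section_at S z) \<le> ennreal \<epsilon>"
    unfolding W1_set_def using W1_le by (metis INF_lower2 W1_commute)
  then show "q \<in> W_pushforward P \<epsilon> R \<inter> {(\<nu>, z). \<nu> \<in> prob_measures \<and> \<nu> \<in> Cure \<epsilon> (section_at S z)}"
    using q \<nu> \<open>(x, z) \<in> R\<close> W1_le unfolding W_pushforward_def Cure_def by auto
qed

end
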